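(* Let $A\in\mathbb{R}^{n\times n}$ be symmetric and positive definite, and let $i_1,\dots,i_n$ be any ordering of the indices $\{1,\dots,n\}$. Define $A^{(1)}=A$ and, for $k=1,\dots,n$, let $a^{(k)}$ denote the $i_k$-th row of $A^{(k)}$ (as a column vector), set $$x_k=\frac{a^{(k)}}{\sqrt{A^{(k)}_{i_ki_k}}},\qquad A^{(k+1)}=A^{(k)}-x_kx_k^{T}.$$ Then every pivot $A^{(k)}_{i_ki_k}$ is positive, and the resulting vectors satisfy $$\sum_{k=1}^n x_kx_k^{*}=A\qquad\text{and}\qquad \sum_{k=1}^n\|x_k\|_1^2\leq n\cdot\operatorname{tr}(A).$$
   Context: $\|x\|_1=\sum_i|x_i|$ denotes the $\ell^1$-norm of a vector. *)

theory Defs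
  imports "HOL-Analysis.Analysis"
begin

definition pos_def_mat :: "real^'n^'n \<Rightarrow> bool" where
  "pos_def_mat A \<longleftrightarrow> (\<forall>x. x \<noteq> 0 \<longrightarrow> x \<bullet> (A *v x) > 0)"

definition outer :: "real^'n \<Rightarrow> real^'n^'n" where
  "outer x = (\<chi> i j. x $ i * x $ j)"

definition norm1 :: "real^'n \<Rightarrow> real" where
  "norm1 x = (\<Sum>i\<in>UNIV. \<bar>x $ i\<bar>)"

text \<open>Pivoted Cholesky iteration, 0-based: chol_A A p 0 = A^(1),
  chol_x A p k = x_(k+1) built from row p k of chol_A A p k.\<close>
fun chol_A :: "real^'n^'n \<Rightarrow> (nat \<Rightarrow> 'n) \<Rightarrow> nat \<Rightarrow> real^'n^'n" where
  "chol_A A p 0 = A"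
| "chol_A A p (Suc k) =
     chol_A A p k - outer ((1 / sqrt (chol_A A p k $ p k $ p k)) *\<^sub>R (chol_A A p k $ p k))"

definition chol_x :: "real^'n^'n \<Rightarrow> (nat \<Rightarrow> 'n) \<Rightarrow> nat \<Rightarrow> real^'n" where
  "chol_x A p k = (1 / sqrt (chol_A A p k $ p k $ p k)) *\<^sub>R (chol_A A p k $ p k)"

end

theory Submission
  imports Defs
begin

text \<open>Each step of the pivoted Cholesky iteration replaces \<open>B\<close> by its Schur complement with
  respect to the pivot \<open>j\<close>: with \<open>d = B\<^sub>j\<^sub>j\<close> and \<open>b\<close> the \<open>j\<close>-th row,
  \<open>x\<^sup>T (B - b b\<^sup>T/d) x = y\<^sup>T B y\<close> for \<open>y = x - (b\<^sup>T x/d) e\<^sub>j\<close>.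
  Hence the update stays positive semidefinite, stays positive definite on vectors supported on
  the indices not yet pivoted, and kills row and column \<open>j\<close>. So all pivots are positive and,
  after every index has been pivoted, the iterate is \<open>0\<close>; the telescoping sum then gives
  \<open>\<Sum> x\<^sub>k x\<^sub>k\<^sup>T = A\<close>. Finally \<open>\<parallel>x\<parallel>\<^sub>1\<^sup>2 \<le> n \<parallel>x\<parallel>\<^sub>2\<^sup>2\<close> by Cauchy-Schwarz and
  \<open>\<Sum> \<parallel>x\<^sub>k\<parallel>\<^sub>2\<^sup>2 = tr (\<Sum> x\<^sub>k x\<^sub>k\<^sup>T) = tr A\<close>.\<close>

lemma outer_mult_vec: "outer v *v x = (v \<bullet> x) *\<^sub>R v"
  by (simp add: vec_eq_iff outer_def matrix_vector_mult_def inner_vec_def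
      sum_distrib_left algebra_simps)

lemma inner_outer_mult_vec: "x \<bullet> (outer v *v x) = (v \<bullet> x)\<^sup>2"
  by (simp add: outer_mult_vec inner_commute power2_eq_square)

lemma transpose_outer [simp]: "transpose (outer v) = outer v"
  by (simp add: vec_eq_iff transpose_def outer_def mult.commute)

lemma transpose_diff: "transpose (A - B) = transpose A - transpose (B :: 'a::ab_group_add^'n^'m)"
  by (simp add: transpose_def vec_eq_iff)

lemma trace_outer: "trace (outer v) = v \<bullet> v"
  by (simp add: trace_def outer_def inner_vec_def)

lemma trace_sum: "trace (\<Sum>k\<in>K. M k) = (\<Sum>k\<in>K. trace (M k :: 'a::comm_semiring_1^'n^'n))"
  by (induction K rule: infinite_finite_induct)
    (simp_all add: trace_add trace_def zero_vec_def sum.distrib)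

lemma norm1_squared_le: "(norm1 v)\<^sup>2 \<le> real CARD('n) * (v \<bullet> v)" for v :: "real^'n"
  using sum_squared_le_sum_of_squares[of "\<lambda>i. \<bar>v $ i\<bar>" UNIV]
  by (simp add: norm1_def inner_vec_def power2_eq_square mult.commute)

lemma symmetric_inner_mult_vec_commute:
  fixes B :: "real^'n^'n"
  assumes "transpose B = B"
  shows "x \<bullet> (B *v y) = y \<bullet> (B *v x)"
proof -
  have "x \<bullet> (B *v y) = (transpose B *v x) \<bullet> y"
    by (simp add: dot_lmul_matrix)
  then show ?thesis
    using assms by (simp add: inner_commute)
qed

lemma quadratic_form_diff_axis:
  fixes B :: "real^'n^'n"
  assumes "transpose B = B"
  shows "(x - axis j t) \<bullet> (B *v (x - axis j t))
    = x \<bullet> (B *v x) - 2 * t * (B $ j \<bullet> x) + t\<^sup>2 * B $ j $ j"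
proof -
  have "axis j t \<bullet> (B *v x) = t * (B $ j \<bullet> x)"
    by (simp add: inner_axis' matrix_vector_mul_component)
  moreover have "axis j t \<bullet> (B *v axis j t) = t\<^sup>2 * B $ j $ j"
    by (simp add: inner_axis' matrix_vector_mul_component inner_axis power2_eq_square)
  ultimately show ?thesis
    using symmetric_inner_mult_vec_commute[OF assms, of x "axis j t"]
    by (simp add: matrix_vector_mult_diff_distrib inner_diff_left inner_diff_right)
qed

definition pivot_update :: "real^'n^'n \<Rightarrow> 'n \<Rightarrow> real^'n^'n" where
  "pivot_update B j = B - outer ((1 / sqrt (B $ j $ j)) *\<^sub>R B $ j)"

lemma chol_A_Suc_pivot_update: "chol_A A p (Suc k) = pivot_update (chol_A A p k) (p k)"
  by (simp add: pivot_update_def)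

lemma quadratic_form_pivot_update:
  fixes B :: "real^'n^'n"
  assumes "transpose B = B" and "B $ j $ j > 0"
  shows "x \<bullet> (pivot_update B j *v x)
    = (x - axis j ((B $ j \<bullet> x) / B $ j $ j)) \<bullet> (B *v (x - axis j ((B $ j \<bullet> x) / B $ j $ j)))"
proof -
  have "x \<bullet> (pivot_update B j *v x) = x \<bullet> (B *v x) - (B $ j \<bullet> x)\<^sup>2 / B $ j $ j"
    by (simp add: pivot_update_def matrix_vector_mult_diff_rdistrib inner_diff_right
        inner_outer_mult_vec power_divide less_imp_le[OF assms(2)])
  then show ?thesis
    using assms(2) by (simp add: quadratic_form_diff_axis[OF assms(1)] field_simps power2_eq_square)
qed

lemma pivot_update_row_eq_0:
  fixes B :: "real^'n^'n"
  assumes "transpose B = B" and "B $ j $ j > 0" and "i = j \<or> B $ i = 0"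
  shows "pivot_update B j $ i = 0"
proof -
  have "i = j \<or> B $ j $ i = 0"
    using assms(1,3) by (metis transpose_def vec_lambda_beta zero_index)
  then show ?thesis
    using assms(2,3)
    by (auto simp: vec_eq_iff pivot_update_def outer_def power2_eq_square[symmetric])
qed

text \<open>The invariant of the iteration, with \<open>S\<close> the set of indices not yet pivoted.\<close>
definition spd_supported :: "real^'n^'n \<Rightarrow> 'n set \<Rightarrow> bool" where
  "spd_supported B S \<longleftrightarrow> transpose B = B \<and> (\<forall>x. 0 \<le> x \<bullet> (B *v x))
     \<and> (\<forall>x. x \<noteq> 0 \<and> (\<forall>i. i \<notin> S \<longrightarrow> x $ i = 0) \<longrightarrow> 0 < x \<bullet> (B *v x))
     \<and> (\<forall>i. i \<notin> S \<longrightarrow> B $ i = 0)"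

lemma pos_def_mat_spd_supported:
  assumes "transpose A = A" and "pos_def_mat A"
  shows "spd_supported A UNIV"
proof -
  have "0 \<le> x \<bullet> (A *v x)" for x
    using assms(2) unfolding pos_def_mat_def
    by (cases "x = 0") (simp_all add: less_imp_le)
  then show ?thesis
    using assms unfolding spd_supported_def pos_def_mat_def by simp
qed

lemma spd_supported_empty: "spd_supported B {} \<Longrightarrow> B = 0"
  by (simp add: spd_supported_def vec_eq_iff)

lemma spd_supported_diag_pos:
  assumes "spd_supported B S" and "j \<in> S"
  shows "B $ j $ j > 0"
proof -
  have pd: "\<And>x. x \<noteq> 0 \<Longrightarrow> (\<forall>i. i \<notin> S \<longrightarrow> x $ i = 0) \<Longrightarrow> 0 < x \<bullet> (B *v x)"
    using assms(1) unfolding spd_supported_def by blast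
  have "\<forall>i. i \<notin> S \<longrightarrow> axis j (1::real) $ i = 0"
    using assms(2) by (auto simp: axis_def)
  then have "0 < axis j 1 \<bullet> (B *v axis j 1)"
    by (intro pd) simp_all
  then show ?thesis
    by (simp add: inner_axis' matrix_vector_mul_component inner_axis)
qed

lemma spd_supported_pivot_update:
  fixes B :: "real^'n^'n"
  assumes inv: "spd_supported B S" and "j \<in> S"
  shows "spd_supported (pivot_update B j) (S - {j})"
proof -
  have symmetric: "transpose B = B" and psd: "\<And>x. 0 \<le> x \<bullet> (B *v x)"
    and pd: "\<And>x. x \<noteq> 0 \<Longrightarrow> (\<forall>i. i \<notin> S \<longrightarrow> x $ i = 0) \<Longrightarrow> 0 < x \<bullet> (B *v x)"
    and rows: "\<And>i. i \<notin> S \<Longrightarrow> B $ i = 0"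
    using inv unfolding spd_supported_def by blast+
  have d: "B $ j $ j > 0"
    using spd_supported_diag_pos[OF assms] .
  define y where "y x = x - axis j ((B $ j \<bullet> x) / B $ j $ j)" for x
  have quad: "x \<bullet> (pivot_update B j *v x) = y x \<bullet> (B *v y x)" for x
    unfolding y_def using quadratic_form_pivot_update[OF symmetric d] .
  have "transpose (pivot_update B j) = pivot_update B j"
    by (simp add: pivot_update_def transpose_diff symmetric)
  moreover have "0 < x \<bullet> (pivot_update B j *v x)"
    if "x \<noteq> 0" and supp: "\<forall>i. i \<notin> S - {j} \<longrightarrow> x $ i = 0" for x
  proof -
    obtain i where "x $ i \<noteq> 0"
      using \<open>x \<noteq> 0\<close> by (auto simp: vec_eq_iff)
    moreover have "i \<noteq> j"
      using supp \<open>x $ i \<noteq> 0\<close> by auto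
    ultimately have "y x $ i \<noteq> 0"
      by (simp add: y_def axis_def)
    then have "y x \<noteq> 0"
      by auto
    moreover have "\<forall>i. i \<notin> S \<longrightarrow> y x $ i = 0"
      using supp \<open>j \<in> S\<close> by (auto simp: y_def axis_def)
    ultimately show ?thesis
      using pd quad by simp
  qed
  moreover have "pivot_update B j $ i = 0" if "i \<notin> S - {j}" for i
    using pivot_update_row_eq_0[OF symmetric d] rows that by blast
  ultimately show ?thesis
    using psd quad by (simp add: spd_supported_def)
qed

lemma chol_A_spd_supported:
  assumes "transpose A = A" and "pos_def_mat A" and "inj_on p {..<k}"
  shows "spd_supported (chol_A A p k) (- p ` {..<k})"
  using assms(3)
proof (induction k)
  case 0
  then show ?case
    using pos_def_mat_spd_supported[OF assms(1,2)] by simp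
next
  case (Suc k)
  then have "inj_on p {..<k}" and "p k \<in> - p ` {..<k}"
    by (simp_all add: lessThan_Suc)
  then have "spd_supported (pivot_update (chol_A A p k) (p k)) (- p ` {..<k} - {p k})"
    using Suc.IH spd_supported_pivot_update by blast
  moreover have "- p ` {..<k} - {p k} = - p ` {..<Suc k}"
    by (auto simp: lessThan_Suc)
  ultimately show ?case
    unfolding chol_A_Suc_pivot_update by simp
qed

lemma chol_A_pivot_pos:
  assumes "transpose A = A" and "pos_def_mat A" and "inj_on p {..<Suc k}"
  shows "chol_A A p k $ p k $ p k > 0"
proof -
  have "inj_on p {..<k}" and "p k \<in> - p ` {..<k}"
    using assms(3) by (simp_all add: lessThan_Suc)
  then show ?thesis
    using chol_A_spd_supported[OF assms(1,2)] spd_supported_diag_pos by blast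
qed

lemma sum_outer_chol_x: "(\<Sum>k<m. outer (chol_x A p k)) = A - chol_A A p m"
  by (induction m) (simp_all add: chol_x_def algebra_simps)

theorem proposition2:
  fixes A :: "real^'n^'n" and p :: "nat \<Rightarrow> 'n"
  assumes "transpose A = A"
    and "pos_def_mat A"
    and "bij_betw p {..<CARD('n)} (UNIV :: 'n set)"
  shows "(\<forall>k<CARD('n). chol_A A p k $ p k $ p k > 0)
    \<and> (\<Sum>k<CARD('n). outer (chol_x A p k)) = A
    \<and> (\<Sum>k<CARD('n). (norm1 (chol_x A p k))\<^sup>2) \<le> real CARD('n) * trace A"
proof -
  let ?n = "CARD('n)"
  have inj: "inj_on p {..<?n}" and onto: "p ` {..<?n} = UNIV"
    using assms(3) by (auto simp: bij_betw_def)
  have pivots: "\<forall>k<?n. chol_A A p k $ p k $ p k > 0"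
    using chol_A_pivot_pos[OF assms(1,2)] inj_on_subset[OF inj] by (simp add: subset_eq)
  have "chol_A A p ?n = 0"
    using chol_A_spd_supported[OF assms(1,2) inj] onto spd_supported_empty by simp
  then have decomposition: "(\<Sum>k<?n. outer (chol_x A p k)) = A"
    by (simp add: sum_outer_chol_x)
  have "(\<Sum>k<?n. (norm1 (chol_x A p k))\<^sup>2) \<le> (\<Sum>k<?n. real ?n * (chol_x A p k \<bullet> chol_x A p k))"
    by (intro sum_mono norm1_squared_le)
  also have "\<dots> = real ?n * trace A"
    by (simp add: sum_distrib_left[symmetric] trace_outer[symmetric] trace_sum[symmetric]
        decomposition)
  finally show ?thesis
    using pivots decomposition by simp
qed

end
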